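(* Let $G(1)=(V(1),E(1))$ be a neutral graph, let $G(2)=(V(2),E(2))$ be a $k$-regular graph, and let $\alpha\geq 2$ and $\beta\geq 1$ be integers with $2(\alpha-1)|E(1)|=\beta|V(2)|$. Let $G^{\oplus}$ be a simple graph obtained from the disjoint union of $G(1)$ and $G(2)$ by adding edges between $V(1)$ and $V(2)$ so that each vertex $u\in V(1)$ is incident to exactly $(\alpha-1)d_u$ added edges (with $d_u$ the degree of $u$ in $G(1)$) and each vertex of $V(2)$ is incident to exactly $\beta$ added edges. If $$\frac{|E(2)|}{|E(1)|}=(\alpha-1)^{2}=\Big(\frac{k}{\beta}\Big)^{2}=\Big(\frac{|V(2)|}{|V(1)|}\Big)^{2},$$ then $G^{\oplus}$ is neutral.
   Context: All graphs are finite, simple and connected. (In the paper's description, $\beta$ "incomplete edges" emanate from each vertex of $G(2)$, and for each edge of $G(1)$, $\alpha-1$ incomplete edges emanate from each of its endvertices; incomplete edges of $G(1)$ are merged one-to-one with incomplete edges of $G(2)$ until none is left.) For a graph $G=(V,E)$ with $m=|E|\geq1$ and degrees $d_u$, the assortativity coefficient is $$r(G)=\frac{m^{-1}\sum_{e_{uv}\in E} d_{u}d_{v}-\Big[m^{-1}\sum_{e_{uv}\in E} \tfrac{1}{2}(d_{u}+d_{v})\Big]^{2}}{m^{-1}\sum_{e_{uv}\in E} \tfrac{1}{2}(d^{2}_{u}+d^{2}_{v})-\Big[m^{-1}\sum_{e_{uv}\in E} \tfrac{1}{2}(d_{u}+d_{v})\Big]^{2}},$$ sums over edges counting each edge once,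 defined whenever the denominator is nonzero; $G$ is neutral if $r(G)$ is defined and equals $0$. *)

theory Defs
  imports Main Complex_Main
begin

definition simple_graph :: "'a set \<Rightarrow> 'a set set \<Rightarrow> bool" where
  "simple_graph V E \<longleftrightarrow> finite V \<and>
     (\<forall>e\<in>E. \<exists>u v. u \<noteq> v \<and> u \<in> V \<and> v \<in> V \<and> e = {u, v})"

definition adj :: "'a set set \<Rightarrow> 'a \<Rightarrow> 'a \<Rightarrow> bool" where
  "adj E u v \<longleftrightarrow> {u, v} \<in> E"

definition connected_graph :: "'a set \<Rightarrow> 'a set set \<Rightarrow> bool" where
  "connected_graph V E \<longleftrightarrow> V \<noteq> {} \<and> (\<forall>u\<in>V. \<forall>v\<in>V. (adj E)\<^sup>*\<^sup>* u v)"

definition graph :: "'a set \<Rightarrow> 'a set set \<Rightarrow> bool" where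
  "graph V E \<longleftrightarrow> simple_graph V E \<and> connected_graph V E"

definition deg :: "'a set set \<Rightarrow> 'a \<Rightarrow> nat" where
  "deg E u = card {e \<in> E. u \<in> e}"

text \<open>For an edge e = {u,v}: product over e of degrees is d_u d_v, sum is d_u + d_v,
  sum of squares is d_u^2 + d_v^2. Sums run over edges, each edge once.\<close>

definition mean_deg :: "'a set set \<Rightarrow> real" where
  "mean_deg E = (\<Sum>e\<in>E. (1/2) * (\<Sum>u\<in>e. real (deg E u))) / real (card E)"

definition assort_num :: "'a set set \<Rightarrow> real" where
  "assort_num E = (\<Sum>e\<in>E. (\<Prod>u\<in>e. real (deg E u))) / real (card E) - (mean_deg E)\<^sup>2"

definition assort_den :: "'a set set \<Rightarrow> real" where
  "assort_den E = (\<Sum>e\<in>E. (1/2) * (\<Sum>u\<in>e. (real (deg E u))\<^sup>2)) / real (card E) - (mean_deg E)\<^sup>2"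

definition assortativity :: "'a set set \<Rightarrow> real" where
  "assortativity E = assort_num E / assort_den E"

definition neutral :: "'a set \<Rightarrow> 'a set set \<Rightarrow> bool" where
  "neutral V E \<longleftrightarrow> card E \<ge> 1 \<and> assort_den E \<noteq> 0 \<and> assortativity E = 0"

definition regular :: "'a set \<Rightarrow> 'a set set \<Rightarrow> nat \<Rightarrow> bool" where
  "regular V E k \<longleftrightarrow> (\<forall>v\<in>V. deg E v = k)"

end

theory Submission
  imports Defs
begin

text \<open>Write a = alpha - 1 and b = beta; the hypotheses force k = a b and |E(2)| = a^2 |E(1)|.
  Then every vertex of G(1) has degree (a + 1) d_u in the join and every vertex of G(2) has
  degree (a + 1) b. Counting the cross edges from either side gives |F| = 2 a |E(1)| = b |V(2)|,
  so the join has (a + 1)^2 |E(1)| edges. Rewriting the edge averages in the assortativity as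
  vertex sums (the sum over edges of d_u + d_v is the sum over vertices of d_u^2, and likewise
  one power higher), one finds that the mean degree shifts by a b, the numerator is unchanged
  and the denominator becomes (a + 1) den(G(1)) + a (mu - b)^2, where mu is the mean degree of
  G(1). So the numerator stays 0, and the denominator stays positive: den(G(1)) is a variance,
  hence nonnegative, and it is nonzero by neutrality.\<close>

lemma simple_graph_edgeE:
  assumes "simple_graph V E" "e \<in> E"
  obtains u v where "u \<noteq> v" "u \<in> V" "v \<in> V" "e = {u, v}"
  using assms unfolding simple_graph_def by blast

lemma simple_graph_edge_subset: "simple_graph V E \<Longrightarrow> e \<in> E \<Longrightarrow> e \<subseteq> V"
  by (erule simple_graph_edgeE) auto

lemma simple_graph_card_edge: "simple_graph V E \<Longrightarrow> e \<in> E \<Longrightarrow> card e = 2"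
  by (erule simple_graph_edgeE) auto

lemma simple_graph_finite_edges:
  assumes "simple_graph V E"
  shows "finite E"
proof (rule finite_subset)
  show "E \<subseteq> Pow V" using simple_graph_edge_subset[OF assms] by blast
  show "finite (Pow V)" using assms by (simp add: simple_graph_def)
qed

lemma deg_eq_0_outside: "simple_graph V E \<Longrightarrow> u \<notin> V \<Longrightarrow> deg E u = 0"
  unfolding deg_def using simple_graph_edge_subset simple_graph_finite_edges by fastforce

lemma deg_Un_disjoint:
  assumes "finite E" "finite F" "E \<inter> F = {}"
  shows "deg (E \<union> F) u = deg E u + deg F u"
proof -
  have "{e \<in> E \<union> F. u \<in> e} = {e \<in> E. u \<in> e} \<union> {e \<in> F. u \<in> e}" by blast
  then show ?thesis
    unfolding deg_def using assms by (simp add: card_Un_disjoint disjoint_iff)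
qed

lemma sum_edges_restrict_eq_sum_deg:
  fixes g :: "'a \<Rightarrow> 'b::comm_semiring_1"
  assumes "finite W" "finite E"
  shows "(\<Sum>e\<in>E. \<Sum>u\<in>{u \<in> W. u \<in> e}. g u) = (\<Sum>u\<in>W. g u * of_nat (deg E u))"
  using sum.swap_restrict[OF assms(2,1), of "\<lambda>_ u. g u" "\<lambda>e u. u \<in> e"]
  by (simp add: deg_def mult.commute)

lemma sum_edges_eq_sum_deg:
  fixes g :: "'a \<Rightarrow> 'b::comm_semiring_1"
  assumes "simple_graph V E"
  shows "(\<Sum>e\<in>E. \<Sum>u\<in>e. g u) = (\<Sum>u\<in>V. g u * of_nat (deg E u))"
proof -
  have "{u \<in> V. u \<in> e} = e" if "e \<in> E" for e
    using simple_graph_edge_subset[OF assms that] by blast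
  then show ?thesis
    using sum_edges_restrict_eq_sum_deg[of V E g] assms
    by (simp add: simple_graph_def simple_graph_finite_edges)
qed

lemma card_eq_sum_deg_if_one_endpoint:
  assumes "finite W" "finite F" "\<And>e. e \<in> F \<Longrightarrow> card {u \<in> W. u \<in> e} = 1"
  shows "card F = (\<Sum>u\<in>W. deg F u)"
  using sum_edges_restrict_eq_sum_deg[OF assms(1,2), of "\<lambda>_. 1::nat"] assms(3) by simp

lemma sum_deg_eq_twice_card:
  assumes "simple_graph V E"
  shows "(\<Sum>u\<in>V. deg E u) = 2 * card E"
  using sum_edges_eq_sum_deg[OF assms, of "\<lambda>_. 1::nat"]
  by (simp add: simple_graph_card_edge[OF assms])

lemma mean_deg_eq_sum_deg_sq:
  assumes "simple_graph V E"
  shows "mean_deg E = (\<Sum>u\<in>V. real (deg E u) ^ 2) / (2 * real (card E))"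
  using sum_edges_eq_sum_deg[OF assms, of "\<lambda>u. real (deg E u)"]
  by (simp add: mean_deg_def sum_divide_distrib[symmetric] power2_eq_square)

lemma assort_den_eq_sum_deg_cube:
  assumes "simple_graph V E"
  shows "assort_den E = (\<Sum>u\<in>V. real (deg E u) ^ 3) / (2 * real (card E)) - (mean_deg E)\<^sup>2"
  using sum_edges_eq_sum_deg[OF assms, of "\<lambda>u. real (deg E u) ^ 2"]
  by (simp add: assort_den_def sum_divide_distrib[symmetric] power2_eq_square power3_eq_cube mult_ac)

lemma assort_den_nonneg:
  assumes "simple_graph V E"
  shows "0 \<le> assort_den E"
proof (cases "card E = 0")
  case True
  then show ?thesis by (simp add: assort_den_def mean_deg_def)
next
  case False
  define d where "d u = real (deg E u)" for u
  define m where "m = real (card E)"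
  define \<mu> where "\<mu> = mean_deg E"
  have m: "m > 0" using False by (simp add: m_def)
  have "0 \<le> (\<Sum>u\<in>V. d u * (d u - \<mu>)\<^sup>2)"
    by (intro sum_nonneg) (simp add: d_def)
  also have "\<dots> = (\<Sum>u\<in>V. d u ^ 3) - 2 * \<mu> * (\<Sum>u\<in>V. d u ^ 2) + \<mu>\<^sup>2 * (\<Sum>u\<in>V. d u)"
    by (simp add: power2_eq_square power3_eq_cube algebra_simps sum.distrib sum_subtractf
        sum_distrib_left)
  also have "\<dots> = 2 * m * assort_den E"
    using m mean_deg_eq_sum_deg_sq[OF assms] assort_den_eq_sum_deg_cube[OF assms]
      arg_cong[OF sum_deg_eq_twice_card[OF assms], of real]
    by (simp add: d_def m_def \<mu>_def field_simps power2_eq_square of_nat_sum)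
  finally show ?thesis using m by (simp add: zero_le_mult_iff)
qed

lemma sum_prod_cross_edges:
  fixes f :: "'a \<Rightarrow> 'b::comm_semiring_1"
  assumes cross: "F \<subseteq> {{u, v} | u v. u \<in> V1 \<and> v \<in> V2}" and disjoint: "V1 \<inter> V2 = {}"
    and finite: "finite V1" "finite F"
    and const: "\<And>v. v \<in> V2 \<Longrightarrow> f v = c"
  shows "(\<Sum>e\<in>F. \<Prod>u\<in>e. f u) = c * (\<Sum>u\<in>V1. f u * of_nat (deg F u))"
proof -
  have "(\<Prod>x\<in>e. f x) = c * (\<Sum>x\<in>{x \<in> V1. x \<in> e}. f x)" if "e \<in> F" for e
  proof -
    obtain u v where uv: "u \<in> V1" "v \<in> V2" "e = {u, v}" using cross \<open>e \<in> F\<close> by blast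
    then have "u \<noteq> v" "{x \<in> V1. x \<in> e} = {u}" using disjoint by auto
    then show ?thesis using uv const by (simp add: mult.commute)
  qed
  then have "(\<Sum>e\<in>F. \<Prod>u\<in>e. f u) = c * (\<Sum>e\<in>F. \<Sum>u\<in>{u \<in> V1. u \<in> e}. f u)"
    by (simp add: sum_distrib_left)
  also have "\<dots> = c * (\<Sum>u\<in>V1. f u * of_nat (deg F u))"
    by (simp only: sum_edges_restrict_eq_sum_deg[OF finite])
  finally show ?thesis .
qed

lemma prod_edge_scale:
  fixes f g :: "'a \<Rightarrow> 'b::comm_semiring_1"
  assumes "simple_graph V E" "e \<in> E" and scale: "\<And>u. u \<in> V \<Longrightarrow> f u = c * g u"
  shows "(\<Prod>u\<in>e. f u) = c\<^sup>2 * (\<Prod>u\<in>e. g u)"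
proof -
  have "e \<subseteq> V" "card e = 2"
    using assms(1,2) by (simp_all add: simple_graph_edge_subset simple_graph_card_edge)
  then have "(\<Prod>u\<in>e. f u) = (\<Prod>u\<in>e. c * g u)"
    using scale by (intro prod.cong) auto
  also have "\<dots> = c\<^sup>2 * (\<Prod>u\<in>e. g u)"
    using \<open>card e = 2\<close> by (simp add: prod.distrib)
  finally show ?thesis .
qed

lemma simple_graph_Un:
  "simple_graph V E \<Longrightarrow> simple_graph V' E' \<Longrightarrow> simple_graph (V \<union> V') (E \<union> E')"
  unfolding simple_graph_def by (metis Un_iff finite_UnI)

locale graph_join =
  fixes V1 V2 :: "'a set" and E1 E2 F :: "'a set set" and a b :: nat
  assumes simple1: "simple_graph V1 E1" and simple2: "simple_graph V2 E2"
    and disjoint: "V1 \<inter> V2 = {}"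
    and cross: "F \<subseteq> {{u, v} | u v. u \<in> V1 \<and> v \<in> V2}"
    and deg_F_V1: "\<And>u. u \<in> V1 \<Longrightarrow> deg F u = a * deg E1 u"
    and deg_F_V2: "\<And>v. v \<in> V2 \<Longrightarrow> deg F v = b"
    and regular2: "regular V2 E2 (a * b)"
    and card_E2: "card E2 = a\<^sup>2 * card E1"
begin

lemma cross_edgeE:
  assumes "e \<in> F"
  obtains u v where "u \<in> V1" "v \<in> V2" "e = {u, v}" "u \<noteq> v"
proof -
  obtain u v where "u \<in> V1" "v \<in> V2" "e = {u, v}" using assms cross by blast
  moreover have "u \<noteq> v" using calculation disjoint by blast
  ultimately show thesis by (rule that)
qed

lemma simple_graph_cross: "simple_graph (V1 \<union> V2) F"
proof -
  have "\<exists>u v. u \<noteq> v \<and> u \<in> V1 \<union> V2 \<and> v \<in> V1 \<union> V2 \<and> e = {u, v}" if "e \<in> F" for e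
    using that by (elim cross_edgeE) blast
  then show ?thesis using simple1 simple2 by (simp add: simple_graph_def)
qed

lemma simple_join: "simple_graph (V1 \<union> V2) (E1 \<union> E2 \<union> F)"
  using simple_graph_Un[OF simple_graph_Un[OF simple1 simple2] simple_graph_cross] by simp

lemma finite_vertices: "finite V1" "finite V2"
  using simple1 simple2 by (simp_all add: simple_graph_def)

lemma finite_edges: "finite E1" "finite E2" "finite F"
  using simple1 simple2 simple_graph_cross by (simp_all add: simple_graph_finite_edges)

lemma edges_disjoint: "E1 \<inter> E2 = {}" "(E1 \<union> E2) \<inter> F = {}"
proof -
  have E1: "e \<subseteq> V1 \<and> e \<noteq> {}" if "e \<in> E1" for e
    using simple1 that by (elim simple_graph_edgeE) auto
  have E2: "e \<subseteq> V2" if "e \<in> E2" for e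
    using simple2 that by (rule simple_graph_edge_subset)
  have F: "\<not> e \<subseteq> V1 \<and> \<not> e \<subseteq> V2" if "e \<in> F" for e
    using that disjoint by (elim cross_edgeE) auto
  show "E1 \<inter> E2 = {}"
  proof (rule equals0I)
    fix e assume "e \<in> E1 \<inter> E2"
    then have "e \<subseteq> V1 \<inter> V2" "e \<noteq> {}" using E1 E2 by auto
    then show False using disjoint by simp
  qed
  show "(E1 \<union> E2) \<inter> F = {}"
  proof (rule equals0I)
    fix e assume e: "e \<in> (E1 \<union> E2) \<inter> F"
    then have "e \<subseteq> V1 \<or> e \<subseteq> V2" using E1 E2 by auto
    then show False using e F by blast
  qed
qed

lemma deg_join: "deg (E1 \<union> E2 \<union> F) u = deg E1 u + deg E2 u + deg F u"
  using finite_edges edges_disjoint by (simp add: deg_Un_disjoint)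

lemma deg_join_V1: "u \<in> V1 \<Longrightarrow> real (deg (E1 \<union> E2 \<union> F) u) = (real a + 1) * real (deg E1 u)"
  using deg_eq_0_outside[OF simple2, of u] disjoint
  by (auto simp: deg_join deg_F_V1 algebra_simps)

lemma deg_join_V2: "v \<in> V2 \<Longrightarrow> real (deg (E1 \<union> E2 \<union> F) v) = (real a + 1) * real b"
  using deg_eq_0_outside[OF simple1, of v] disjoint regular2
  by (auto simp: deg_join deg_F_V2 regular_def algebra_simps)

lemma card_cross: "card F = 2 * a * card E1" "card F = b * card V2"
proof -
  have one: "card {x \<in> V1. x \<in> e} = 1 \<and> card {x \<in> V2. x \<in> e} = 1" if "e \<in> F" for e
  proof -
    obtain u v where "u \<in> V1" "v \<in> V2" "e = {u, v}" using \<open>e \<in> F\<close> by (rule cross_edgeE)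
    then have "{x \<in> V1. x \<in> e} = {u}" "{x \<in> V2. x \<in> e} = {v}" using disjoint by auto
    then show ?thesis by simp
  qed
  have "card F = (\<Sum>u\<in>V1. deg F u)" "card F = (\<Sum>v\<in>V2. deg F v)"
    by (rule card_eq_sum_deg_if_one_endpoint; use finite_vertices finite_edges one in simp)+
  then show "card F = 2 * a * card E1" "card F = b * card V2"
    using sum_deg_eq_twice_card[OF simple1]
    by (simp_all add: deg_F_V1 deg_F_V2 sum_distrib_left[symmetric] mult.commute)
qed

lemma card_join: "real (card (E1 \<union> E2 \<union> F)) = (real a + 1)\<^sup>2 * real (card E1)"
proof -
  have "card (E1 \<union> E2 \<union> F) = card E1 + a\<^sup>2 * card E1 + 2 * a * card E1"
    using finite_edges edges_disjoint card_E2 card_cross(1) by (simp add: card_Un_disjoint)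
  then show ?thesis by (simp add: power2_eq_square algebra_simps)
qed

lemma sum_deg_power_join:
  "(\<Sum>u\<in>V1 \<union> V2. real (deg (E1 \<union> E2 \<union> F) u) ^ Suc j) =
     (real a + 1) ^ Suc j *
       ((\<Sum>u\<in>V1. real (deg E1 u) ^ Suc j) + 2 * real a * real b ^ j * real (card E1))"
proof -
  have "(\<Sum>v\<in>V2. real (deg (E1 \<union> E2 \<union> F) v) ^ Suc j) =
      real (card V2) * ((real a + 1) * real b) ^ Suc j"
    by (simp add: deg_join_V2)
  also have "\<dots> = (real a + 1) ^ Suc j * (real b ^ j * real (b * card V2))"
    by (simp add: power_mult_distrib mult_ac)
  also have "\<dots> = (real a + 1) ^ Suc j * (2 * real a * real b ^ j * real (card E1))"
    by (simp add: card_cross(2)[symmetric] card_cross(1))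
  finally show ?thesis
    using finite_vertices disjoint
    by (simp add: sum.union_disjoint deg_join_V1 power_mult_distrib sum_distrib_left
        distrib_left mult_ac)
qed

lemma sum_edge_prod_join:
  "(\<Sum>e\<in>E1 \<union> E2 \<union> F. \<Prod>u\<in>e. real (deg (E1 \<union> E2 \<union> F) u)) =
     (real a + 1)\<^sup>2 * ((\<Sum>e\<in>E1. \<Prod>u\<in>e. real (deg E1 u))
       + (real a * real b)\<^sup>2 * real (card E1) + real a * real b * (\<Sum>u\<in>V1. real (deg E1 u) ^ 2))"
proof -
  let ?d = "\<lambda>u. real (deg (E1 \<union> E2 \<union> F) u)"
  have "(\<Sum>e\<in>E1. \<Prod>u\<in>e. ?d u) = (\<Sum>e\<in>E1. (real a + 1)\<^sup>2 * (\<Prod>u\<in>e. real (deg E1 u)))"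
    using prod_edge_scale[OF simple1, of _ ?d] deg_join_V1 by (intro sum.cong) auto
  also have "\<dots> = (real a + 1)\<^sup>2 * (\<Sum>e\<in>E1. \<Prod>u\<in>e. real (deg E1 u))"
    by (simp add: sum_distrib_left)
  finally have E1: "(\<Sum>e\<in>E1. \<Prod>u\<in>e. ?d u) = \<dots>" .
  have "(\<Sum>e\<in>E2. \<Prod>u\<in>e. ?d u) = (\<Sum>e\<in>E2. (real a + 1)\<^sup>2 * real b ^ card e)"
    using prod_edge_scale[OF simple2, of _ ?d] deg_join_V2 by (intro sum.cong) auto
  also have "\<dots> = (real a + 1)\<^sup>2 * ((real a * real b)\<^sup>2 * real (card E1))"
    using simple_graph_card_edge[OF simple2] card_E2 by (simp add: power_mult_distrib)
  finally have E2: "(\<Sum>e\<in>E2. \<Prod>u\<in>e. ?d u) = \<dots>" .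
  have "(\<Sum>e\<in>F. \<Prod>u\<in>e. ?d u) = (real a + 1) * real b * (\<Sum>u\<in>V1. ?d u * real (deg F u))"
    using finite_vertices finite_edges
    by (intro sum_prod_cross_edges[OF cross disjoint]) (simp_all add: deg_join_V2)
  also have "\<dots> = (real a + 1)\<^sup>2 * (real a * real b * (\<Sum>u\<in>V1. real (deg E1 u) ^ 2))"
    by (simp add: deg_join_V1 deg_F_V1 sum_distrib_left power2_eq_square mult_ac)
  finally have F: "(\<Sum>e\<in>F. \<Prod>u\<in>e. ?d u) = \<dots>" .
  show ?thesis
    using finite_edges edges_disjoint
    by (simp add: sum.union_disjoint E1 E2 F distrib_left)
qed

lemma mean_deg_join:
  assumes "card E1 > 0"
  shows "mean_deg (E1 \<union> E2 \<union> F) = mean_deg E1 + real a * real b"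
proof -
  define m1 where "m1 = real (card E1)"
  define A2 where "A2 = (\<Sum>u\<in>V1. real (deg E1 u) ^ 2)"
  have "(\<Sum>u\<in>V1 \<union> V2. real (deg (E1 \<union> E2 \<union> F) u) ^ 2) =
      (real a + 1)\<^sup>2 * (A2 + 2 * real a * real b * m1)"
    using sum_deg_power_join[of 1] by (simp add: A2_def m1_def power2_eq_square)
  moreover have "real (card (E1 \<union> E2 \<union> F)) = (real a + 1)\<^sup>2 * m1"
    by (simp add: card_join m1_def)
  moreover have "mean_deg E1 = A2 / (2 * m1)"
    by (simp add: mean_deg_eq_sum_deg_sq[OF simple1] A2_def m1_def)
  ultimately show ?thesis
    using assms by (simp add: mean_deg_eq_sum_deg_sq[OF simple_join] m1_def field_simps)
qed

lemma assort_num_join: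
  assumes "card E1 > 0"
  shows "assort_num (E1 \<union> E2 \<union> F) = assort_num E1"
proof -
  define m1 where "m1 = real (card E1)"
  define S1 where "S1 = (\<Sum>e\<in>E1. \<Prod>u\<in>e. real (deg E1 u))"
  define \<mu> where "\<mu> = mean_deg E1"
  define c where "c = real a + 1"
  have m1: "m1 > 0" using assms by (simp add: m1_def)
  have c: "c > 0" by (simp add: c_def)
  have A2: "(\<Sum>u\<in>V1. real (deg E1 u) ^ 2) = 2 * m1 * \<mu>"
    using m1 by (simp add: \<mu>_def m1_def mean_deg_eq_sum_deg_sq[OF simple1])
  have "assort_num (E1 \<union> E2 \<union> F) =
      c\<^sup>2 * (S1 + (real a * real b)\<^sup>2 * m1 + real a * real b * (2 * m1 * \<mu>)) / (c\<^sup>2 * m1)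
        - (\<mu> + real a * real b)\<^sup>2"
    using assms by (simp add: assort_num_def sum_edge_prod_join A2 card_join mean_deg_join
        S1_def m1_def \<mu>_def c_def)
  also have "\<dots> = S1 / m1 - \<mu>\<^sup>2"
    using m1 c by (simp add: field_simps power2_eq_square)
  also have "\<dots> = assort_num E1"
    by (simp add: assort_num_def S1_def m1_def \<mu>_def)
  finally show ?thesis .
qed

lemma assort_den_join:
  assumes "card E1 > 0"
  shows "assort_den (E1 \<union> E2 \<union> F) =
    (real a + 1) * assort_den E1 + real a * (mean_deg E1 - real b)\<^sup>2"
proof -
  define m1 where "m1 = real (card E1)"
  define A3 where "A3 = (\<Sum>u\<in>V1. real (deg E1 u) ^ 3)"
  define \<mu> where "\<mu> = mean_deg E1"
  define c where "c = real a + 1"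
  have m1: "m1 > 0" using assms by (simp add: m1_def)
  have c: "c > 0" by (simp add: c_def)
  have "(\<Sum>u\<in>V1 \<union> V2. real (deg (E1 \<union> E2 \<union> F) u) ^ 3) =
      c ^ 3 * (A3 + 2 * real a * real b ^ 2 * m1)"
    using sum_deg_power_join[of 2]
    by (simp add: A3_def m1_def c_def power2_eq_square power3_eq_cube)
  then have "assort_den (E1 \<union> E2 \<union> F) =
      c ^ 3 * (A3 + 2 * real a * real b ^ 2 * m1) / (2 * (c\<^sup>2 * m1)) - (\<mu> + real a * real b)\<^sup>2"
    using assms by (simp add: assort_den_eq_sum_deg_cube[OF simple_join] card_join mean_deg_join
        m1_def \<mu>_def c_def)
  also have "\<dots> = c * (A3 + 2 * real a * real b ^ 2 * m1) / (2 * m1) - (\<mu> + real a * real b)\<^sup>2"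
    using c by (simp add: power2_eq_square power3_eq_cube)
  also have "\<dots> = c * (A3 / (2 * m1) - \<mu>\<^sup>2) + real a * (\<mu> - real b)\<^sup>2"
    using m1 by (simp add: c_def field_simps power2_eq_square)
  also have "\<dots> = (real a + 1) * assort_den E1 + real a * (mean_deg E1 - real b)\<^sup>2"
    by (simp add: assort_den_eq_sum_deg_cube[OF simple1] A3_def m1_def \<mu>_def c_def)
  finally show ?thesis .
qed

lemma neutral_join:
  assumes "neutral V1 E1"
  shows "neutral (V1 \<union> V2) (E1 \<union> E2 \<union> F)"
proof -
  have m1: "card E1 > 0" and den1: "assort_den E1 > 0" and num1: "assort_num E1 = 0"
    using assms assort_den_nonneg[OF simple1]
    by (auto simp: neutral_def assortativity_def order_less_le)
  have "assort_den (E1 \<union> E2 \<union> F) > 0"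
    using den1 by (simp add: assort_den_join[OF m1] add_pos_nonneg)
  moreover have "real (card (E1 \<union> E2 \<union> F)) > 0"
    using m1 by (simp add: card_join)
  ultimately show ?thesis
    by (simp add: neutral_def assortativity_def assort_num_join[OF m1] num1 Suc_le_eq)
qed

end

theorem lemma7:
  fixes V1 V2 :: "'a set" and E1 E2 F :: "'a set set" and k \<alpha> \<beta> :: nat
  assumes G1: "graph V1 E1" and G2: "graph V2 E2"
    and disj: "V1 \<inter> V2 = {}"
    and neut: "neutral V1 E1"
    and reg: "regular V2 E2 k"
    and alpha: "\<alpha> \<ge> 2" and beta: "\<beta> \<ge> 1"
    and count: "2 * (\<alpha> - 1) * card E1 = \<beta> * card V2"
    and F_cross: "F \<subseteq> {{u, v} | u v. u \<in> V1 \<and> v \<in> V2}"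
    and F_V1: "\<forall>u\<in>V1. card {e \<in> F. u \<in> e} = (\<alpha> - 1) * deg E1 u"
    and F_V2: "\<forall>v\<in>V2. card {e \<in> F. v \<in> e} = \<beta>"
    and r1: "real (card E2) / real (card E1) = (real \<alpha> - 1)\<^sup>2"
    and r2: "(real \<alpha> - 1)\<^sup>2 = (real k / real \<beta>)\<^sup>2"
    and r3: "(real k / real \<beta>)\<^sup>2 = (real (card V2) / real (card V1))\<^sup>2"
  shows "neutral (V1 \<union> V2) (E1 \<union> E2 \<union> F)"
proof -
  have alpha': "real (\<alpha> - 1) = real \<alpha> - 1" using alpha by (simp add: of_nat_diff)
  have "real (\<alpha> - 1) = real k / real \<beta>"
    using r2 alpha' by (simp add: power2_eq_iff_nonneg)
  then have k: "k = (\<alpha> - 1) * \<beta>"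
    using beta by (simp add: field_simps flip: of_nat_mult)
  have "real (card E2) = real (\<alpha> - 1) ^ 2 * real (card E1)"
    using r1 alpha' neut by (simp add: neutral_def field_simps)
  then have E2: "card E2 = (\<alpha> - 1)\<^sup>2 * card E1"
    by (simp flip: of_nat_mult of_nat_power)
  interpret graph_join V1 V2 E1 E2 F "\<alpha> - 1" \<beta>
    using G1 G2 disj F_cross F_V1 F_V2 reg k E2
    by unfold_locales (simp_all add: graph_def deg_def)
  show ?thesis using neut by (rule neutral_join)
qed

end
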